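(* Assume (A1)–(A2) and $N\geq \max\{1,\|f\|_\infty/2\}$, and let $v_n^h$ ($n\ge0$) be the functions produced by the semi-discrete policy iteration described in the context. Then for all $n\geq 0$, $v_{n+1}^h\leq v_n^h$ in $[0,T]\times\mathbb{R}^d$.
   Context: Let $d,m\ge1$, $T\ge 1$, $A\subset\mathbb{R}^m$ compact, $c:[0,T]\times\mathbb{R}^d\times A\to\mathbb{R}$, $f:[0,T]\times\mathbb{R}^d\times A\to\mathbb{R}^d$, $q:\mathbb{R}^d\to\mathbb{R}$. Let $\alpha(t,x,p)=\operatorname{argmin}_{a\in A}[c(t,x,a)+p\cdot f(t,x,a)]$, assumed to be the unique minimizer. Assumptions: (A1) $c,f,q$ are uniformly bounded and Lipschitz continuous in all their variables; (A2) $\alpha(\cdot,\cdot,\cdot)$ and a given continuous initial policy $\alpha_0:\mathbb{R}\times\mathbb{R}^d\to A$ are uniformly Lipschitz continuous in all their variables. For $\varphi:\mathbb{R}^d\to\mathbb{R}$, $h\in(0,1)$: $\nabla^h\varphi(x)=\big(\frac{\varphi(x+he_i)-\varphi(x-he_i)}{2h}\big)_{i=1}^d$, $\Delta^h\varphi(x)=\sum_{i=1}^d\frac{\varphi(x+he_i)-2\varphi(x)+\varphi(x-he_i)}{h^2}$ (acting in $x$). Semi-discrete policy iteration: for $n=0,1,\dots$, $v_n^h$ is the bounded Lipschitz solution of $\partial_t v_n^h+c(t,x,\alpha_n(t,x))+\nabla^h v_n^h\cdot f(t,x,\alpha_n(t,x))=-Nh\Delta^h v_n^h$ in $(0,T)\times\mathbb{R}^d$,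 $v_n^h(T,x)=q(x)$, and then $\alpha_{n+1}(t,x)=\alpha(t,x,\nabla^h v_n^h(t,x))$. *)

theory Defs
  imports "HOL-Analysis.Analysis"
begin

definition disc_grad :: "real \<Rightarrow> (real^'d \<Rightarrow> real) \<Rightarrow> real^'d \<Rightarrow> real^'d" where
  "disc_grad h \<phi> x = (\<chi> i. (\<phi> (x + h *\<^sub>R axis i 1) - \<phi> (x - h *\<^sub>R axis i 1)) / (2 * h))"

definition disc_lap :: "real \<Rightarrow> (real^'d \<Rightarrow> real) \<Rightarrow> real^'d \<Rightarrow> real" where
  "disc_lap h \<phi> x = (\<Sum>i\<in>UNIV. (\<phi> (x + h *\<^sub>R axis i 1) - 2 * \<phi> x + \<phi> (x - h *\<^sub>R axis i 1)) / h\<^sup>2)"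

end

theory Submission
  imports Defs
begin

text \<open>Let \<open>w = v\<^sub>n\<^sub>+\<^sub>1 - v\<^sub>n\<close>. Since \<open>\<alpha>\<^sub>n\<^sub>+\<^sub>1\<close> minimises the Hamiltonian for \<open>\<nabla>\<^sup>h v\<^sub>n\<close>, subtracting the two
  equations shows that \<open>-\<partial>\<^sub>t w\<close> is bounded above by \<open>N h \<Delta>\<^sup>h w + \<nabla>\<^sup>h w \<cdot> b\<close> with \<open>b = f(\<alpha>\<^sub>n\<^sub>+\<^sub>1)\<close>.
  For \<open>N \<ge> |b|/2\<close> this is a nonnegative combination of the increments \<open>w(x \<plusminus> h e\<^sub>i) - w(x)\<close>,
  so it is \<open>\<le> 0\<close> wherever \<open>w(t,\<cdot>)\<close> attains its maximum. As the maximum need not be attained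
  on \<open>\<real>\<^sup>d\<close>, the resulting maximum principle is proved backward in time in steps so short that,
  by the time-Lipschitz bound, the increments stay uniformly small along each step; an
  \<open>\<epsilon>\<close>-perturbation makes the inequalities strict.\<close>

lemma disc_lap_diff: "disc_lap h (\<lambda>y. u y - w y) x = disc_lap h u x - disc_lap h w x"
  unfolding disc_lap_def
  by (simp add: sum_subtractf[symmetric] diff_divide_distrib[symmetric] algebra_simps)

lemma disc_grad_diff: "disc_grad h (\<lambda>y. u y - w y) x = disc_grad h u x - disc_grad h w x"
  unfolding disc_grad_def by (simp add: vec_eq_iff diff_divide_distrib[symmetric] algebra_simps)

lemma disc_generator_eq_sum:
  fixes w :: "real^'d \<Rightarrow> real"
  assumes "h \<noteq> 0"
  shows "N * h * disc_lap h w x + disc_grad h w x \<bullet> b =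
    (\<Sum>i\<in>UNIV. (N/h + b$i/(2*h)) * (w (x + h *\<^sub>R axis i 1) - w x)
             + (N/h - b$i/(2*h)) * (w (x - h *\<^sub>R axis i 1) - w x))"
  unfolding disc_lap_def disc_grad_def inner_vec_def
  using assms by (simp add: sum_distrib_left sum.distrib[symmetric] power2_eq_square,
      intro sum.cong refl, simp add: field_simps)

lemma disc_generator_le:
  fixes w :: "real^'d \<Rightarrow> real"
  assumes h: "h > 0" and b: "\<And>i. \<bar>b$i\<bar> \<le> 2 * N"
    and plus: "\<And>i. w (x + h *\<^sub>R axis i 1) - w x \<le> D"
    and minus: "\<And>i. w (x - h *\<^sub>R axis i 1) - w x \<le> D"
  shows "N * h * disc_lap h w x + disc_grad h w x \<bullet> b \<le> real CARD('d) * (2 * N / h) * D"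
proof -
  have "(N/h + b$i/(2*h)) * (w (x + h *\<^sub>R axis i 1) - w x)
      + (N/h - b$i/(2*h)) * (w (x - h *\<^sub>R axis i 1) - w x) \<le> 2 * N / h * D" for i
  proof -
    have "N/h + b$i/(2*h) \<ge> 0" "N/h - b$i/(2*h) \<ge> 0"
      using b[of i] h by (auto simp: field_simps abs_le_iff)
    then have "(N/h + b$i/(2*h)) * (w (x + h *\<^sub>R axis i 1) - w x)
        + (N/h - b$i/(2*h)) * (w (x - h *\<^sub>R axis i 1) - w x)
        \<le> (N/h + b$i/(2*h)) * D + (N/h - b$i/(2*h)) * D"
      using plus[of i] minus[of i] by (intro add_mono mult_left_mono)
    then show ?thesis by (simp add: field_simps)
  qed
  then have "(\<Sum>i\<in>UNIV. (N/h + b$i/(2*h)) * (w (x + h *\<^sub>R axis i 1) - w x)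
      + (N/h - b$i/(2*h)) * (w (x - h *\<^sub>R axis i 1) - w x)) \<le> (\<Sum>i\<in>(UNIV::'d set). 2 * N / h * D)"
    by (rule sum_mono)
  then show ?thesis using disc_generator_eq_sum[of h N w x b] h by simp
qed

lemma policy_improvement_rhs_diff_ge:
  fixes u v :: "real^'d \<Rightarrow> real" and b b' :: "real^'d"
  assumes h: "h > 0" and b: "\<And>i. \<bar>b$i\<bar> \<le> 2 * N"
    and improve: "c + disc_grad h v x \<bullet> b \<le> c' + disc_grad h v x \<bullet> b'"
    and increments: "\<And>y. u y - v y \<le> u x - v x + D"
  shows "(- N * h * disc_lap h u x - c - disc_grad h u x \<bullet> b)
      - (- N * h * disc_lap h v x - c' - disc_grad h v x \<bullet> b')
      \<ge> - (real CARD('d) * (2 * N / h)) * D"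
proof -
  have "N * h * disc_lap h (\<lambda>y. u y - v y) x + disc_grad h (\<lambda>y. u y - v y) x \<bullet> b
      \<le> real CARD('d) * (2 * N / h) * D"
    by (rule disc_generator_le[OF h b]) (smt (verit) increments)+
  then show ?thesis
    using improve by (simp add: disc_lap_diff disc_grad_diff algebra_simps)
qed

lemma backward_max_principle_step:
  fixes u :: "real \<Rightarrow> 'a \<Rightarrow> real"
  assumes lip: "\<And>x. L-lipschitz_on {0..T} (\<lambda>t. u t x)"
    and deriv: "\<And>t x. t \<in> {0<..<T} \<Longrightarrow> ((\<lambda>s. u s x) has_real_derivative u' t x) (at t)"
    and max_principle: "\<And>t x D. t \<in> {0<..<T} \<Longrightarrow> (\<And>y. u t y \<le> u t x + D) \<Longrightarrow> u' t x \<ge> \<epsilon> - C * D"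
    and C: "C \<ge> 0" and \<eta>: "C * L * \<eta> < \<epsilon>"
    and \<tau>: "\<tau> \<in> {0..T}" "\<And>y. u \<tau> y \<le> 0"
    and t: "t \<in> {0..T}" "\<tau> - \<eta> \<le> t" "t \<le> \<tau>"
  shows "u t x \<le> 0"
proof (rule ccontr)
  assume "\<not> u t x \<le> 0"
  then have pos: "u t x > 0" by simp
  with \<tau> t have "t < \<tau>" by (metis order.not_eq_order_implies_strict not_le)
  have time_lip: "\<bar>u r y - u s y\<bar> \<le> L * \<bar>r - s\<bar>" if "r \<in> {0..T}" "s \<in> {0..T}" for r s y
    using lipschitz_onD[OF lip that] by (simp add: dist_real_def)
  have "u t x < u \<tau> x"
  proof (rule DERIV_pos_imp_increasing_open[OF \<open>t < \<tau>\<close>])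
    fix r assume r: "t < r" "r < \<tau>"
    then have r_in: "r \<in> {0<..<T}" using t \<tau> by auto
    have "u r y \<le> u r x + L * \<eta>" for y
    proof -
      have "u r y \<le> u \<tau> y + L * (\<tau> - r)" "u t x \<le> u r x + L * (r - t)"
        using time_lip[of r \<tau> y] time_lip[of t r x] r r_in t \<tau> by (auto simp: abs_le_iff)
      moreover have "L * (\<tau> - t) \<le> L * \<eta>"
        using t lipschitz_on_nonneg[OF lip] by (intro mult_left_mono) auto
      ultimately show ?thesis using \<tau>(2)[of y] pos by (simp add: algebra_simps)
    qed
    then have "u' r x \<ge> \<epsilon> - C * (L * \<eta>)" by (rule max_principle[OF r_in])
    then show "\<exists>l. ((\<lambda>s. u s x) has_real_derivative l) (at r) \<and> l > 0"
      using deriv[OF r_in] \<eta> by (intro exI[of _ "u' r x"]) (simp add: mult.assoc)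
  next
    show "continuous_on {t..\<tau>} (\<lambda>s. u s x)"
      using lipschitz_on_continuous_on[OF lip] by (rule continuous_on_subset) (use t \<tau> in auto)
  qed
  then show False using pos \<tau>(2)[of x] by simp
qed

lemma backward_max_principle_strict:
  fixes u :: "real \<Rightarrow> 'a \<Rightarrow> real"
  assumes lip: "\<And>x. L-lipschitz_on {0..T} (\<lambda>t. u t x)"
    and deriv: "\<And>t x. t \<in> {0<..<T} \<Longrightarrow> ((\<lambda>s. u s x) has_real_derivative u' t x) (at t)"
    and max_principle: "\<And>t x D. t \<in> {0<..<T} \<Longrightarrow> (\<And>y. u t y \<le> u t x + D) \<Longrightarrow> u' t x \<ge> \<epsilon> - C * D"
    and \<epsilon>: "\<epsilon> > 0" and C: "C \<ge> 0"
    and terminal: "\<And>x. u T x \<le> 0"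
    and t: "t \<in> {0..T}"
  shows "u t x \<le> 0"
proof -
  define \<eta> where "\<eta> = \<epsilon> / (C * L + 1)"
  have CL: "C * L \<ge> 0" using C lipschitz_on_nonneg[OF lip] by simp
  then have \<eta>_pos: "\<eta> > 0" and CL\<eta>: "C * L * \<eta> < \<epsilon>"
    using \<epsilon> by (auto simp: \<eta>_def field_simps)
  have "\<forall>t\<in>{0..T}. T - real k * \<eta> \<le> t \<longrightarrow> (\<forall>x. u t x \<le> 0)" for k
  proof (induction k)
    case 0
    then show ?case using terminal by force
  next
    case (Suc k)
    show ?case
    proof (intro ballI impI allI)
      fix t x assume t: "t \<in> {0..T}" "T - real (Suc k) * \<eta> \<le> t"
      show "u t x \<le> 0"
      proof (cases "T - real k * \<eta> \<le> t")
        case True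
        then show ?thesis using Suc.IH t by blast
      next
        case False
        with t \<eta>_pos have \<tau>: "T - real k * \<eta> \<in> {0..T}" by auto
        show ?thesis
          by (rule backward_max_principle_step[OF lip deriv max_principle C CL\<eta> \<tau>])
            (use Suc.IH \<tau> t False in \<open>auto simp: algebra_simps\<close>)
      qed
    qed
  qed
  moreover obtain k where "T / \<eta> \<le> real k" using real_arch_simple by blast
  then have "T - real k * \<eta> \<le> t" using t \<eta>_pos by (simp add: field_simps)
  ultimately show ?thesis using t by blast
qed

lemma backward_max_principle:
  fixes w :: "real \<Rightarrow> 'a \<Rightarrow> real"
  assumes lip: "\<And>x. L-lipschitz_on {0..T} (\<lambda>t. w t x)"
    and deriv: "\<And>t x. t \<in> {0<..<T} \<Longrightarrow> ((\<lambda>s. w s x) has_real_derivative w' t x) (at t)"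
    and max_principle: "\<And>t x D. t \<in> {0<..<T} \<Longrightarrow> (\<And>y. w t y \<le> w t x + D) \<Longrightarrow> w' t x \<ge> - C * D"
    and C: "C \<ge> 0"
    and terminal: "\<And>x. w T x \<le> 0"
    and t: "t \<in> {0..T}"
  shows "w t x \<le> 0"
proof (rule field_le_epsilon)
  fix e :: real
  assume "e > 0"
  define \<epsilon> where "\<epsilon> = e / (T + 1)"
  have \<epsilon>: "\<epsilon> > 0" "\<epsilon> * T \<le> e"
    using \<open>e > 0\<close> t by (auto simp: \<epsilon>_def field_simps)
  have "w t x - \<epsilon> * (T - t) \<le> 0"
  proof (rule backward_max_principle_strict[where u' = "\<lambda>s y. w' s y + \<epsilon>" and C = C, OF _ _ _ \<epsilon>(1) C _ t])
    show "(L + \<epsilon>)-lipschitz_on {0..T} (\<lambda>s. w s y - \<epsilon> * (T - s))" for y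
    proof (intro lipschitz_on_diff lip lipschitz_onI)
      show "dist (\<epsilon> * (T - r)) (\<epsilon> * (T - s)) \<le> \<epsilon> * dist r s" for r s
      proof -
        have "\<epsilon> * (T - r) - \<epsilon> * (T - s) = \<epsilon> * (s - r)" by (simp add: algebra_simps)
        then show ?thesis using \<epsilon>(1) by (simp add: dist_real_def abs_mult abs_minus_commute)
      qed
    qed (use \<epsilon>(1) in simp)
    show "((\<lambda>s. w s y - \<epsilon> * (T - s)) has_real_derivative w' s y + \<epsilon>) (at s)"
      if "s \<in> {0<..<T}" for s y
      using deriv[OF that] by (auto intro!: derivative_eq_intros)
    show "\<epsilon> - C * D \<le> w' s y + \<epsilon>"
      if "s \<in> {0<..<T}" "\<And>z. w s z - \<epsilon> * (T - s) \<le> w s y - \<epsilon> * (T - s) + D" for s y D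
      using max_principle[of s y D] that by simp
  qed (use terminal in simp)
  moreover have "\<epsilon> * (T - t) \<le> \<epsilon> * T" using \<epsilon>(1) t by simp
  ultimately show "w t x \<le> 0 + e" using \<epsilon>(2) by linarith
qed

lemma lipschitz_on_slice:
  assumes "L-lipschitz_on (S \<times> X) (\<lambda>(t, x). u t x)" "x \<in> X"
  shows "L-lipschitz_on S (\<lambda>t. u t x)"
proof (rule lipschitz_onI)
  show "dist (u s x) (u t x) \<le> L * dist s t" if "s \<in> S" "t \<in> S" for s t
    using lipschitz_onD[OF assms(1), of "(s, x)" "(t, x)"] assms(2) that
    by (simp add: dist_Pair_Pair)
  show "0 \<le> L" using lipschitz_on_nonneg[OF assms(1)] .
qed

lemma abs_component_le_SUP_norm:
  fixes F :: "'s \<Rightarrow> real^'n"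
  assumes "bounded (F ` S)" "s \<in> S"
  shows "\<bar>F s $ i\<bar> \<le> (SUP s\<in>S. norm (F s))"
proof -
  have "bdd_above ((\<lambda>s. norm (F s)) ` S)"
    using assms(1) by (simp add: bounded_imp_bdd_above bounded_norm_comp)
  with assms(2) have "norm (F s) \<le> (SUP s\<in>S. norm (F s))" by (rule cSUP_upper)
  then show ?thesis using component_le_norm_cart order_trans by blast
qed

theorem proposition2p3:
  fixes T h N :: real
    and A :: "(real^'m) set"
    and c :: "real \<Rightarrow> real^'d \<Rightarrow> real^'m \<Rightarrow> real"
    and f :: "real \<Rightarrow> real^'d \<Rightarrow> real^'m \<Rightarrow> real^'d"
    and q :: "real^'d \<Rightarrow> real"
    and \<alpha> :: "real \<Rightarrow> real^'d \<Rightarrow> real^'d \<Rightarrow> real^'m"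
    and \<alpha>0 :: "real \<Rightarrow> real^'d \<Rightarrow> real^'m"
    and v :: "nat \<Rightarrow> real \<Rightarrow> real^'d \<Rightarrow> real"
    and pol :: "nat \<Rightarrow> real \<Rightarrow> real^'d \<Rightarrow> real^'m"
  assumes T: "T \<ge> 1"
    and h: "0 < h" "h < 1"
    and A: "compact A"
    \<comment> \<open>(A1)\<close>
    and c_bdd: "bounded ((\<lambda>(t, x, a). c t x a) ` ({0..T} \<times> UNIV \<times> A))"
    and c_lip: "\<exists>L. L-lipschitz_on ({0..T} \<times> UNIV \<times> A) (\<lambda>(t, x, a). c t x a)"
    and f_bdd: "bounded ((\<lambda>(t, x, a). f t x a) ` ({0..T} \<times> UNIV \<times> A))"
    and f_lip: "\<exists>L. L-lipschitz_on ({0..T} \<times> UNIV \<times> A) (\<lambda>(t, x, a). f t x a)"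
    and q_bdd: "bounded (range q)"
    and q_lip: "\<exists>L. L-lipschitz_on UNIV q"
    \<comment> \<open>alpha is the unique minimizer of c + p . f over A\<close>
    and alpha_min: "\<And>t x p. t \<in> {0..T} \<Longrightarrow> \<alpha> t x p \<in> A \<and>
        (\<forall>a\<in>A. a \<noteq> \<alpha> t x p \<longrightarrow>
           c t x (\<alpha> t x p) + p \<bullet> f t x (\<alpha> t x p) < c t x a + p \<bullet> f t x a)"
    \<comment> \<open>(A2)\<close>
    and alpha_lip: "\<exists>L. L-lipschitz_on ({0..T} \<times> UNIV \<times> UNIV) (\<lambda>(t, x, p). \<alpha> t x p)"
    and alpha0_A: "\<And>t x. \<alpha>0 t x \<in> A"
    and alpha0_cont: "continuous_on UNIV (\<lambda>(t, x). \<alpha>0 t x)"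
    and alpha0_lip: "\<exists>L. L-lipschitz_on UNIV (\<lambda>(t, x). \<alpha>0 t x)"
    \<comment> \<open>condition on N\<close>
    and N: "N \<ge> max 1 ((SUP (t, x, a) \<in> {0..T} \<times> UNIV \<times> A. norm (f t x a)) / 2)"
    \<comment> \<open>policy iteration\<close>
    and pol0: "pol 0 = \<alpha>0"
    and polSuc: "\<And>n t x. pol (Suc n) t x = \<alpha> t x (disc_grad h (v n t) x)"
    and v_bdd: "\<And>n. bounded ((\<lambda>(t, x). v n t x) ` ({0..T} \<times> UNIV))"
    and v_lip: "\<And>n. \<exists>L. L-lipschitz_on ({0..T} \<times> UNIV) (\<lambda>(t, x). v n t x)"
    and v_eq: "\<And>n t x. t \<in> {0<..<T} \<Longrightarrow>
        ((\<lambda>s. v n s x) has_real_derivative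
           (- N * h * disc_lap h (v n t) x - c t x (pol n t x)
            - disc_grad h (v n t) x \<bullet> f t x (pol n t x))) (at t)"
    and v_T: "\<And>n x. v n T x = q x"
  shows "\<forall>n. \<forall>t\<in>{0..T}. \<forall>x. v (Suc n) t x \<le> v n t x"
proof (intro allI ballI)
  fix n t x
  assume t: "t \<in> {0..T}"
  define rhs where "rhs m s y = - N * h * disc_lap h (v m s) y - c s y (pol m s y)
      - disc_grad h (v m s) y \<bullet> f s y (pol m s y)" for m s y
  have pol_in_A: "pol m s y \<in> A" if "s \<in> {0..T}" for m s y
    using that pol0 polSuc alpha0_A alpha_min by (cases m) auto
  have f_le: "\<bar>f s y a $ i\<bar> \<le> 2 * N" if "s \<in> {0..T}" "a \<in> A" for s y a i
    using abs_component_le_SUP_norm[OF f_bdd, of "(s, y, a)" i] that N by (simp add: case_prod_beta)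
  have improves: "c s y (pol (Suc n) s y) + disc_grad h (v n s) y \<bullet> f s y (pol (Suc n) s y)
      \<le> c s y (pol n s y) + disc_grad h (v n s) y \<bullet> f s y (pol n s y)" if "s \<in> {0..T}" for s y
    using alpha_min[OF that, of y "disc_grad h (v n s) y"] pol_in_A[OF that] polSuc
    by (metis less_eq_real_def order_refl)
  obtain L0 L1 where L0: "L0-lipschitz_on ({0..T} \<times> UNIV) (\<lambda>(t, x). v (Suc n) t x)"
    and L1: "L1-lipschitz_on ({0..T} \<times> UNIV) (\<lambda>(t, x). v n t x)"
    using v_lip by blast
  have "v (Suc n) t x - v n t x \<le> 0"
  proof (rule backward_max_principle[where w = "\<lambda>s y. v (Suc n) s y - v n s y"
        and w' = "\<lambda>s y. rhs (Suc n) s y - rhs n s y" and C = "real CARD('d) * (2 * N / h)", OF _ _ _ _ _ t])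
    show "(L0 + L1)-lipschitz_on {0..T} (\<lambda>s. v (Suc n) s y - v n s y)" for y
      using lipschitz_on_slice[OF L0] lipschitz_on_slice[OF L1] by (intro lipschitz_on_diff) auto
    show "((\<lambda>s. v (Suc n) s y - v n s y) has_real_derivative rhs (Suc n) s y - rhs n s y) (at s)"
      if "s \<in> {0<..<T}" for s y
      unfolding rhs_def using that by (intro DERIV_diff v_eq)
    show "rhs (Suc n) s y - rhs n s y \<ge> - (real CARD('d) * (2 * N / h)) * D"
      if "s \<in> {0<..<T}" "\<And>z. v (Suc n) s z - v n s z \<le> v (Suc n) s y - v n s y + D" for s y D
      unfolding rhs_def polSuc[of n s y, symmetric]
      using h(1) f_le pol_in_A improves that by (intro policy_improvement_rhs_diff_ge) auto
  qed (use N h v_T in auto)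
  then show "v (Suc n) t x \<le> v n t x" by simp
qed

end
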